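(* Let $m,n\ge 1$ be integers, let $X=[x_1,\dots,x_n]^T$ be a random vector in $\mathbb{R}^n$, and let $S=(S_{i,j})$ be an $m\times n$ random matrix; set $A=\frac{1}{\sqrt{m}}S$ and $C=\frac{m}{n}$. Suppose that all the random variables $x_i$ ($1\le i\le n$) and $S_{i,j}$ ($1\le i\le m$, $1\le j\le n$) are independent and identically distributed, with mean zero and variance one, and that they are sub-Gaussian with parameter $v=1$, i.e. $\mathbb{E}e^{\lambda Y}\le e^{\lambda^2/2}$ for all $\lambda\in\mathbb{R}$, where $Y$ denotes any of these variables. Then for all $t>0$: \begin{enumerate} \item $\displaystyle \mathbb{P}\left( \frac{1}{\sqrt{n}} \left| \|X\|^2 -n \right|> t \right) < 2\exp\left\{ - \min\left(\frac{t^2}{160}, \frac{t\sqrt{n}}{10}\right) \right\};$ \item $\displaystyle \mathbb{P}\left( \frac{1}{\sqrt{n}} \left| \|AX\|^2 - \|X\|^2 \right|> \frac{\|X\|^2}{n}\, t \right) < 2 \exp \left\{ -\min \left( \frac{t^2 C}{160} , \frac{t C \sqrt{n}}{10} \right) \right\}.$ \end{enumerate}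
   Context: $\|\cdot\|$ denotes the Euclidean norm. A real random variable $Y$ is called sub-Gaussian with parameter $v>0$ if $\mathbb{E}e^{\lambda Y}\le e^{\lambda^2 v/2}$ for all $\lambda\in\mathbb{R}$. *)

theory Defs
  imports "HOL-Probability.Probability"
begin

definition subgaussian :: "'a measure \<Rightarrow> real \<Rightarrow> ('a \<Rightarrow> real) \<Rightarrow> bool" where
  "subgaussian M v Y \<longleftrightarrow>
     (\<forall>l::real. integrable M (\<lambda>\<omega>. exp (l * Y \<omega>)) \<and>
        (\<integral>\<omega>. exp (l * Y \<omega>) \<partial>M) \<le> exp (l\<^sup>2 * v / 2))"

text \<open>All entries of X (indices Inl i, i<n) and of S (indices Inr (i,j), i<m, j<n) as one family.\<close>
definition entries :: "(nat \<Rightarrow> 'a \<Rightarrow> real) \<Rightarrow> (nat \<Rightarrow> nat \<Rightarrow> 'a \<Rightarrow> real)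
    \<Rightarrow> nat + nat \<times> nat \<Rightarrow> 'a \<Rightarrow> real" where
  "entries x S k = (case k of Inl i \<Rightarrow> x i | Inr (i, j) \<Rightarrow> S i j)"

definition entry_index :: "nat \<Rightarrow> nat \<Rightarrow> (nat + nat \<times> nat) set" where
  "entry_index m n = Inl ` {..<n} \<union> Inr ` ({..<m} \<times> {..<n})"

definition sqnorm_X :: "nat \<Rightarrow> (nat \<Rightarrow> 'a \<Rightarrow> real) \<Rightarrow> 'a \<Rightarrow> real" where
  "sqnorm_X n x \<omega> = (\<Sum>i<n. (x i \<omega>)\<^sup>2)"

definition sqnorm_AX :: "nat \<Rightarrow> nat \<Rightarrow> (nat \<Rightarrow> nat \<Rightarrow> 'a \<Rightarrow> real) \<Rightarrow> (nat \<Rightarrow> 'a \<Rightarrow> real) \<Rightarrow> 'a \<Rightarrow> real" where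
  "sqnorm_AX m n S x \<omega> = (\<Sum>i<m. ((\<Sum>j<n. (1 / sqrt (real m)) * S i j \<omega> * x j \<omega>))\<^sup>2)"

end

theory Submission
  imports Defs
begin

(* For sub-Gaussian Y with E Y^2 = 1, the moment bound E Y^(2k) <= 2 e^k k! gives
   E exp (theta Y^2) <= exp (theta + 35 theta^2) for theta <= 1/5.  So ||X||^2, a sum of n
   independent such squares, satisfies E exp (theta ||X||^2) <= exp (n (theta + 35 theta^2)), and
   Chernoff's bound with theta = min (u / (70 n)) (1/5) gives the first estimate.
   For a fixed vector v /= 0 the m coordinates of S v / ||v|| are again independent, sub-Gaussian
   with parameter 1 and of unit variance, so ||S v||^2 / ||v||^2 = m ||A v||^2 / ||v||^2 obeys the
   same bound with m in place of n.  Since X is independent of S, integrating over X preserves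
   this bound, and the same Chernoff argument gives the second estimate. *)

lemma power_div_fact_le_exp:
  fixes y :: real assumes "0 \<le> y" shows "y ^ k / fact k \<le> exp y"
proof -
  have "(\<lambda>i. y ^ i /\<^sub>R fact i) sums exp y" by (rule exp_converges)
  then have "sum (\<lambda>i. y ^ i /\<^sub>R fact i) {k} \<le> exp y"
    using assms sum_le_suminf[of "\<lambda>i. y ^ i /\<^sub>R fact i" "{k}"] by (auto simp: sums_iff)
  then show ?thesis by (simp add: divide_inverse mult.commute)
qed

lemma even_power_le_exp_plus_exp_neg:
  fixes w :: real
  shows "w ^ (2 * k) \<le> fact (2 * k) / (2 * real k) ^ k
           * (exp (sqrt (2 * real k) * w) + exp (- sqrt (2 * real k) * w))"
proof -
  define l where "l = sqrt (2 * real k)"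
  have pos: "(2 * real k) ^ k > 0" by (cases k) auto
  have "(l * w) ^ (2 * k) / fact (2 * k) = \<bar>l * w\<bar> ^ (2 * k) / fact (2 * k)"
    by (simp add: power_even_abs)
  also have "\<dots> \<le> exp \<bar>l * w\<bar>" by (rule power_div_fact_le_exp) simp
  also have "\<dots> \<le> exp (l * w) + exp (- l * w)"
    using exp_gt_zero[of "l * w"] exp_gt_zero[of "- l * w"] by (auto simp: abs_if)
  finally have "(l * w) ^ (2 * k) \<le> fact (2 * k) * (exp (l * w) + exp (- l * w))"
    by (simp add: divide_le_eq mult.commute)
  moreover have "(l * w) ^ (2 * k) = (2 * real k) ^ k * w ^ (2 * k)"
    by (simp add: l_def power_mult_distrib power_mult)
  ultimately show ?thesis
    using pos by (simp add: l_def le_divide_eq mult.commute)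
qed

lemma exp_le_Taylor_quadratic_nonpos:
  fixes z :: real assumes "z \<le> 0" shows "exp z \<le> 1 + z + z\<^sup>2 / 2"
proof -
  obtain s where s: "exp z = (\<Sum>i<3. z ^ i / fact i) + exp s / fact 3 * z ^ 3"
    using Maclaurin_exp_le by blast
  have "(\<Sum>i<3. z ^ i / fact i) = 1 + z + z\<^sup>2 / 2"
    by (simp add: numeral_3_eq_3 numeral_2_eq_2)
  moreover have "exp s / fact 3 * z ^ 3 \<le> 0"
    using assms by (intro mult_nonneg_nonpos) (simp_all add: power_le_zero_eq)
  ultimately show ?thesis using s by linarith
qed

lemma fact_double_le: "fact (2 * k) \<le> (fact k :: real) * (2 * real k) ^ k"
proof -
  have "fact (2 * k) = fact k * (fact (2 * k) div fact k :: nat)"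
    by (simp add: fact_dvd)
  also have "\<dots> \<le> fact k * (2 * k) ^ k"
    using fact_div_fact_le_pow[of k "2 * k"] by simp
  finally have "real (fact (2 * k)) \<le> real (fact k * (2 * k) ^ k)"
    by (rule of_nat_mono)
  then show ?thesis by simp
qed

lemma subgaussian_measurable: "subgaussian M v W \<Longrightarrow> W \<in> borel_measurable M"
proof -
  assume "subgaussian M v W"
  then have "integrable M (\<lambda>\<omega>. exp (1 * W \<omega>))" by (simp only: subgaussian_def)
  then have "(\<lambda>\<omega>. ln (exp (1 * W \<omega>))) \<in> borel_measurable M"
    by (intro borel_measurable_ln borel_measurable_integrable)
  then show ?thesis by simp
qed

lemma nn_integral_exp_square_eq_suminf:
  fixes W :: "'a \<Rightarrow> real"
  assumes [measurable]: "W \<in> borel_measurable M" and "0 \<le> \<theta>"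
  shows "(\<integral>\<^sup>+\<omega>. ennreal (exp (\<theta> * (W \<omega>)\<^sup>2)) \<partial>M)
           = (\<Sum>k. \<integral>\<^sup>+\<omega>. ennreal (\<theta> ^ k / fact k * W \<omega> ^ (2 * k)) \<partial>M)"
proof -
  have term_nonneg: "0 \<le> \<theta> ^ k / fact k * W \<omega> ^ (2 * k)" for k \<omega>
    using assms(2) by (simp add: power_mult)
  have "(\<lambda>k. \<theta> ^ k / fact k * W \<omega> ^ (2 * k)) sums exp (\<theta> * (W \<omega>)\<^sup>2)" for \<omega>
  proof -
    have "(\<theta> * (W \<omega>)\<^sup>2) ^ k /\<^sub>R fact k = \<theta> ^ k / fact k * W \<omega> ^ (2 * k)" for k
      by (simp add: power_mult power_mult_distrib divide_inverse)
    then show ?thesis using exp_converges[of "\<theta> * (W \<omega>)\<^sup>2"] by simp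
  qed
  then have "ennreal (exp (\<theta> * (W \<omega>)\<^sup>2)) = (\<Sum>k. ennreal (\<theta> ^ k / fact k * W \<omega> ^ (2 * k)))" for \<omega>
    using term_nonneg by (simp add: suminf_ennreal2 sums_iff)
  then show ?thesis
    by (simp add: nn_integral_suminf)
qed

lemma suminf_moment_series_le:
  fixes b :: "nat \<Rightarrow> real" and \<theta> :: real
  assumes b_nonneg: "\<And>k. 0 \<le> b k" and b_le: "\<And>k. b k \<le> 2 * (exp 1 * \<theta>) ^ k"
    and "b 0 + b 1 = 1 + \<theta>" and \<theta>: "0 \<le> \<theta>" "\<theta> \<le> 1/5"
  shows "summable b" and "suminf b \<le> 1 + \<theta> + 35 * \<theta>\<^sup>2"
proof -
  define x where "x = exp 1 * \<theta>"
  have "exp 1 * \<theta> \<le> 272/100 * (1/5)"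
    using \<theta> e_less_272 by (intro mult_mono) auto
  then have x: "0 \<le> x" "x \<le> 14/25"
    using \<theta> by (auto simp: x_def)
  have tail_le: "b (k + 2) \<le> 2 * x\<^sup>2 * x ^ k" for k
  proof -
    have "b (k + 2) \<le> 2 * x ^ (k + 2)" unfolding x_def by (rule b_le)
    also have "\<dots> = 2 * x\<^sup>2 * x ^ k" by (simp add: power_add power2_eq_square)
    finally show ?thesis .
  qed
  have geometric: "(\<lambda>k. 2 * x\<^sup>2 * x ^ k) sums (2 * x\<^sup>2 / (1 - x))"
    using sums_mult[OF geometric_sums, of x "2 * x\<^sup>2"] x by simp
  have tail_summable: "summable (\<lambda>k. b (k + 2))"
    using b_nonneg tail_le by (intro summable_comparison_test'[OF sums_summable[OF geometric]]) auto
  then show summable: "summable b"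
    by (rule summable_iff_shift[THEN iffD1])
  have "2 * x\<^sup>2 / (1 - x) \<le> 35 * \<theta>\<^sup>2"
  proof -
    have "exp 1 ^ 2 \<le> (272 / 100 :: real) ^ 2"
      using e_less_272 by (intro power_mono) auto
    then have "exp 1 ^ 2 * \<theta>\<^sup>2 \<le> 15/2 * \<theta>\<^sup>2"
      by (intro mult_right_mono) (auto simp: power2_eq_square)
    moreover have "35 * \<theta>\<^sup>2 * (11/25) \<le> 35 * \<theta>\<^sup>2 * (1 - x)"
      using x by (intro mult_left_mono) auto
    moreover have "x\<^sup>2 = exp 1 ^ 2 * \<theta>\<^sup>2"
      by (simp add: x_def power_mult_distrib)
    ultimately have "2 * x\<^sup>2 \<le> 35 * \<theta>\<^sup>2 * (1 - x)"
      using zero_le_power2[of \<theta>] by linarith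
    then show ?thesis using x by (simp add: divide_le_eq)
  qed
  have "suminf b = (\<Sum>k. b (k + 2)) + (b 0 + b 1)"
    using suminf_split_initial_segment[OF summable, of 2] by (simp add: numeral_2_eq_2)
  also have "(\<Sum>k. b (k + 2)) \<le> (\<Sum>k. 2 * x\<^sup>2 * x ^ k)"
    using tail_le tail_summable geometric by (intro suminf_le) (auto simp: sums_iff)
  also have "\<dots> = 2 * x\<^sup>2 / (1 - x)"
    using geometric by (simp add: sums_iff)
  also have "b 0 + b 1 = 1 + \<theta>"
    by fact
  finally show "suminf b \<le> 1 + \<theta> + 35 * \<theta>\<^sup>2"
    using \<open>2 * x\<^sup>2 / (1 - x) \<le> 35 * \<theta>\<^sup>2\<close> by linarith
qed

lemma Chernoff_exponent_optimise:
  fixes N u p :: real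
  assumes "N > 0" "u > 0"
    and bound: "\<And>\<theta>. 0 < \<theta> \<Longrightarrow> \<theta> \<le> 1/5 \<Longrightarrow> p \<le> exp (35 * N * \<theta>\<^sup>2 - \<theta> * u)"
  shows "p < exp (- min (u\<^sup>2 / (160 * N)) (u / 10))"
proof (cases "u \<le> 14 * N")
  case True
  define \<theta> where "\<theta> = u / (70 * N)"
  have "p \<le> exp (35 * N * \<theta>\<^sup>2 - \<theta> * u)"
    using True assms by (intro bound) (simp_all add: \<theta>_def field_simps)
  also have "35 * N * \<theta>\<^sup>2 - \<theta> * u = - (u\<^sup>2 / (140 * N))"
    using assms by (simp add: \<theta>_def power2_eq_square field_simps)
  also have "u\<^sup>2 / (160 * N) < u\<^sup>2 / (140 * N)"
    using assms by (intro divide_strict_left_mono) auto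
  then have "exp (- (u\<^sup>2 / (140 * N))) < exp (- min (u\<^sup>2 / (160 * N)) (u / 10))"
    by simp
  finally show ?thesis .
next
  case False
  have "p \<le> exp (35 * N * (1/5)\<^sup>2 - 1/5 * u)"
    by (rule bound) auto
  also have "\<dots> < exp (- min (u\<^sup>2 / (160 * N)) (u / 10))"
    using False by (simp add: power2_eq_square)
  finally show ?thesis .
qed

context prob_space
begin

lemma subgaussian_even_moment:
  assumes sg: "subgaussian M 1 W"
  shows "integrable M (\<lambda>\<omega>. W \<omega> ^ (2 * k))"
    and "expectation (\<lambda>\<omega>. W \<omega> ^ (2 * k)) \<le> 2 * exp 1 ^ k * fact k"
proof -
  have [measurable]: "W \<in> borel_measurable M"
    using sg by (rule subgaussian_measurable)
  have mgf_int: "integrable M (\<lambda>\<omega>. exp (l * W \<omega>))"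
    and mgf_le: "expectation (\<lambda>\<omega>. exp (l * W \<omega>)) \<le> exp (l\<^sup>2 / 2)" for l
    using sg by (auto simp: subgaussian_def)
  define l where "l = sqrt (2 * real k)"
  define C :: real where "C = fact (2 * k) / (2 * real k) ^ k"
  have "(2 * real k) ^ k > 0" by (cases k) auto
  then have C: "0 \<le> C" "C \<le> fact k"
    using fact_double_le[of k] by (auto simp: C_def divide_le_eq mult.commute)
  have pointwise: "W \<omega> ^ (2 * k) \<le> C * (exp (l * W \<omega>) + exp (- l * W \<omega>))" for \<omega>
    unfolding C_def l_def by (rule even_power_le_exp_plus_exp_neg)
  have int_bound: "integrable M (\<lambda>\<omega>. C * (exp (l * W \<omega>) + exp (- l * W \<omega>)))"
    by (intro integrable_mult_right Bochner_Integration.integrable_add mgf_int)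
  show int: "integrable M (\<lambda>\<omega>. W \<omega> ^ (2 * k))"
  proof (rule Bochner_Integration.integrable_bound[OF int_bound])
    show "AE \<omega> in M. norm (W \<omega> ^ (2 * k)) \<le> norm (C * (exp (l * W \<omega>) + exp (- l * W \<omega>)))"
      using pointwise C(1) by (auto simp: power_mult intro!: AE_I2 order_trans[OF _ abs_ge_self])
  qed measurable
  have "expectation (\<lambda>\<omega>. W \<omega> ^ (2 * k))
        \<le> expectation (\<lambda>\<omega>. C * (exp (l * W \<omega>) + exp (- l * W \<omega>)))"
    by (rule integral_mono[OF int int_bound pointwise])
  also have "\<dots> = C * (expectation (\<lambda>\<omega>. exp (l * W \<omega>)) + expectation (\<lambda>\<omega>. exp (- l * W \<omega>)))"
    using mgf_int[of l] mgf_int[of "- l"] by simp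
  also have "\<dots> \<le> C * (exp (l\<^sup>2 / 2) + exp ((- l)\<^sup>2 / 2))"
    using C(1) mgf_le[of l] mgf_le[of "- l"] by (intro mult_left_mono add_mono) auto
  also have "\<dots> = 2 * exp 1 ^ k * C"
    by (simp add: l_def flip: exp_of_nat_mult)
  also have "\<dots> \<le> 2 * exp 1 ^ k * fact k"
    using C(2) by simp
  finally show "expectation (\<lambda>\<omega>. W \<omega> ^ (2 * k)) \<le> 2 * exp 1 ^ k * fact k" .
qed

lemma subgaussian_square_mgf_nonneg:
  assumes sg: "subgaussian M 1 W" and W2: "expectation (\<lambda>\<omega>. (W \<omega>)\<^sup>2) = 1"
    and \<theta>: "0 \<le> \<theta>" "\<theta> \<le> 1/5"
  shows "(\<integral>\<^sup>+\<omega>. ennreal (exp (\<theta> * (W \<omega>)\<^sup>2)) \<partial>M) \<le> ennreal (exp (\<theta> + 35 * \<theta>\<^sup>2))"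
proof -
  have [measurable]: "W \<in> borel_measurable M"
    using sg by (rule subgaussian_measurable)
  define b where "b k = \<theta> ^ k / fact k * expectation (\<lambda>\<omega>. W \<omega> ^ (2 * k))" for k
  have b_nonneg: "0 \<le> b k" for k
    using \<theta> by (simp add: b_def power_mult)
  have b_le: "b k \<le> 2 * (exp 1 * \<theta>) ^ k" for k
  proof -
    have "b k \<le> \<theta> ^ k / fact k * (2 * exp 1 ^ k * fact k)"
      unfolding b_def using \<theta> by (intro mult_left_mono subgaussian_even_moment(2)[OF sg]) auto
    then show ?thesis by (simp add: power_mult_distrib mult_ac)
  qed
  have "b 0 + b 1 = 1 + \<theta>"
    using W2 by (simp add: b_def prob_space)
  then have summable: "summable b" and "suminf b \<le> 1 + \<theta> + 35 * \<theta>\<^sup>2"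
    using suminf_moment_series_le[OF b_nonneg b_le _ \<theta>] by auto
  then have suminf_le: "suminf b \<le> exp (\<theta> + 35 * \<theta>\<^sup>2)"
    using exp_ge_add_one_self[of "\<theta> + 35 * \<theta>\<^sup>2"] by linarith
  have "(\<integral>\<^sup>+\<omega>. ennreal (exp (\<theta> * (W \<omega>)\<^sup>2)) \<partial>M) = (\<Sum>k. ennreal (b k))"
  proof -
    have "(\<integral>\<^sup>+\<omega>. ennreal (\<theta> ^ k / fact k * W \<omega> ^ (2 * k)) \<partial>M) = ennreal (b k)" for k
      using subgaussian_even_moment(1)[OF sg, of k] \<theta>
      by (subst nn_integral_eq_integral) (auto simp: b_def power_mult)
    then show ?thesis
      using \<theta> by (simp add: nn_integral_exp_square_eq_suminf)
  qed
  also have "\<dots> = ennreal (suminf b)"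
    by (rule suminf_ennreal2[OF b_nonneg summable])
  finally show ?thesis
    using suminf_le by (simp add: ennreal_leI)
qed

lemma subgaussian_square_mgf_nonpos:
  assumes sg: "subgaussian M 1 W" and W2: "expectation (\<lambda>\<omega>. (W \<omega>)\<^sup>2) = 1" and "\<theta> \<le> 0"
  shows "(\<integral>\<^sup>+\<omega>. ennreal (exp (\<theta> * (W \<omega>)\<^sup>2)) \<partial>M) \<le> ennreal (exp (\<theta> + 35 * \<theta>\<^sup>2))"
proof -
  have int2: "integrable M (\<lambda>\<omega>. (W \<omega>)\<^sup>2)"
    using subgaussian_even_moment(1)[OF sg, of 1] by simp
  have int4: "integrable M (\<lambda>\<omega>. W \<omega> ^ 4)"
    using subgaussian_even_moment(1)[OF sg, of 2] by simp
  have "expectation (\<lambda>\<omega>. W \<omega> ^ 4) \<le> 4 * exp 1 ^ 2"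
    using subgaussian_even_moment(2)[OF sg, of 2] by simp
  also have "\<dots> \<le> 4 * (272 / 100) ^ 2"
    using e_less_272 by (intro mult_left_mono power_mono) auto
  finally have fourth_moment: "expectation (\<lambda>\<omega>. W \<omega> ^ 4) \<le> 30"
    by (simp add: power2_eq_square)
  define g where "g = (\<lambda>\<omega>. 1 + \<theta> * (W \<omega>)\<^sup>2 + \<theta>\<^sup>2 / 2 * W \<omega> ^ 4)"
  have exp_le_g: "exp (\<theta> * (W \<omega>)\<^sup>2) \<le> g \<omega>" for \<omega>
    using exp_le_Taylor_quadratic_nonpos[of "\<theta> * (W \<omega>)\<^sup>2"] \<open>\<theta> \<le> 0\<close>
    by (simp add: g_def mult_nonpos_nonneg power_mult_distrib flip: power_mult)
  have "(\<integral>\<^sup>+\<omega>. ennreal (exp (\<theta> * (W \<omega>)\<^sup>2)) \<partial>M) \<le> (\<integral>\<^sup>+\<omega>. ennreal (g \<omega>) \<partial>M)"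
    by (intro nn_integral_mono ennreal_leI exp_le_g)
  also have "\<dots> = ennreal (expectation g)"
    using int2 int4 exp_le_g by (intro nn_integral_eq_integral) (auto simp: g_def intro: order_trans[OF exp_ge_zero])
  also have "expectation g = 1 + \<theta> + \<theta>\<^sup>2 / 2 * expectation (\<lambda>\<omega>. W \<omega> ^ 4)"
    using int2 int4 W2 by (simp add: g_def prob_space)
  also have "\<dots> \<le> 1 + (\<theta> + 35 * \<theta>\<^sup>2)"
    using mult_left_mono[OF fourth_moment, of "\<theta>\<^sup>2 / 2"] zero_le_power2[of \<theta>] by linarith
  also have "\<dots> \<le> exp (\<theta> + 35 * \<theta>\<^sup>2)"
    by (rule exp_ge_add_one_self)
  finally show ?thesis by (simp add: ennreal_leI)
qed

lemma subgaussian_square_mgf: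
  assumes "subgaussian M 1 W" and "expectation (\<lambda>\<omega>. (W \<omega>)\<^sup>2) = 1" and "\<theta> \<le> 1/5"
  shows "(\<integral>\<^sup>+\<omega>. ennreal (exp (\<theta> * (W \<omega>)\<^sup>2)) \<partial>M) \<le> ennreal (exp (\<theta> + 35 * \<theta>\<^sup>2))"
  using assms subgaussian_square_mgf_nonneg subgaussian_square_mgf_nonpos by (cases "\<theta> \<le> 0") auto

lemma indep_vars_compose_restrict:
  assumes indep: "indep_vars (\<lambda>_. borel) X I"
    and "\<And>j. j \<in> J \<Longrightarrow> K j \<subseteq> I" and "disjoint_family_on K J"
    and "\<And>j. j \<in> J \<Longrightarrow> f j \<in> borel_measurable (PiM (K j) (\<lambda>_. borel))"
  shows "indep_vars (\<lambda>_. borel) (\<lambda>j \<omega>. f j (\<lambda>k\<in>K j. X k \<omega>)) J"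
  by (rule indep_vars_compose2[OF indep_vars_restrict[OF indep assms(2,3)] assms(4)])

lemma indep_vars_reindex:
  assumes "indep_vars (\<lambda>_. borel) X I" and "inj_on h J" and "h ` J \<subseteq> I"
  shows "indep_vars (\<lambda>_. borel) (\<lambda>j. X (h j)) J"
proof -
  have "indep_vars (\<lambda>_. borel) (\<lambda>j \<omega>. (\<lambda>r. r (h j)) (\<lambda>k\<in>{h j}. X k \<omega>)) J"
    using assms
    by (intro indep_vars_compose_restrict) (auto simp: disjoint_family_on_def inj_on_def)
  then show ?thesis by simp
qed

lemma subgaussian_sum_indep:
  assumes fin: "finite J" and ind: "indep_vars (\<lambda>_. borel) Y J"
    and sg: "\<And>j. j \<in> J \<Longrightarrow> subgaussian M (v j) (Y j)"
  shows "subgaussian M (\<Sum>j\<in>J. (c j)\<^sup>2 * v j) (\<lambda>\<omega>. \<Sum>j\<in>J. c j * Y j \<omega>)"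
  unfolding subgaussian_def
proof
  fix l :: real
  have exp_sum_eq: "exp (l * (\<Sum>j\<in>J. c j * Y j \<omega>)) = (\<Prod>j\<in>J. exp ((l * c j) * Y j \<omega>))" for \<omega>
    by (simp add: exp_sum[OF fin, symmetric] sum_distrib_left mult.assoc)
  have ind_exp: "indep_vars (\<lambda>_. borel) (\<lambda>j \<omega>. exp ((l * c j) * Y j \<omega>)) J"
    by (rule indep_vars_compose2[OF ind]) simp
  have int: "j \<in> J \<Longrightarrow> integrable M (\<lambda>\<omega>. exp ((l * c j) * Y j \<omega>))" for j
    using sg by (simp add: subgaussian_def)
  have "integrable M (\<lambda>\<omega>. exp (l * (\<Sum>j\<in>J. c j * Y j \<omega>)))"
    unfolding exp_sum_eq by (rule indep_vars_integrable[OF fin ind_exp int])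
  moreover have "expectation (\<lambda>\<omega>. exp (l * (\<Sum>j\<in>J. c j * Y j \<omega>)))
      = (\<Prod>j\<in>J. expectation (\<lambda>\<omega>. exp ((l * c j) * Y j \<omega>)))"
    unfolding exp_sum_eq by (rule indep_vars_lebesgue_integral[OF fin ind_exp int])
  moreover have "\<dots> \<le> (\<Prod>j\<in>J. exp ((l * c j)\<^sup>2 * v j / 2))"
    using sg by (intro prod_mono conjI integral_nonneg) (auto simp: subgaussian_def)
  moreover have "\<dots> = exp (l\<^sup>2 * (\<Sum>j\<in>J. (c j)\<^sup>2 * v j) / 2)"
    by (simp add: exp_sum[OF fin, symmetric] sum_distrib_left sum_divide_distrib power_mult_distrib mult_ac)
  ultimately show "integrable M (\<lambda>\<omega>. exp (l * (\<Sum>j\<in>J. c j * Y j \<omega>))) \<and>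
      expectation (\<lambda>\<omega>. exp (l * (\<Sum>j\<in>J. c j * Y j \<omega>))) \<le> exp (l\<^sup>2 * (\<Sum>j\<in>J. (c j)\<^sup>2 * v j) / 2)"
    by simp
qed

lemma second_moment_sum_indep:
  fixes Y :: "'i \<Rightarrow> 'a \<Rightarrow> real"
  assumes fin: "finite J" and ind: "indep_vars (\<lambda>_. borel) Y J"
    and mean: "\<And>j. j \<in> J \<Longrightarrow> expectation (Y j) = 0"
    and sq_int: "\<And>j. j \<in> J \<Longrightarrow> integrable M (\<lambda>\<omega>. (Y j \<omega>)\<^sup>2)"
    and sq: "\<And>j. j \<in> J \<Longrightarrow> expectation (\<lambda>\<omega>. (Y j \<omega>)\<^sup>2) = 1"
  shows "expectation (\<lambda>\<omega>. (\<Sum>j\<in>J. c j * Y j \<omega>)\<^sup>2) = (\<Sum>j\<in>J. (c j)\<^sup>2)"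
proof -
  have int: "integrable M (Y j)" if "j \<in> J" for j
  proof (rule square_integrable_imp_integrable)
    show "Y j \<in> borel_measurable M"
      using ind that by (simp add: indep_vars_def)
  qed (rule sq_int[OF that])
  have square_eq: "(\<Sum>j\<in>J. c j * Y j \<omega>)\<^sup>2 = (\<Sum>j\<in>J. \<Sum>k\<in>J. (c j * c k) * (Y j \<omega> * Y k \<omega>))" for \<omega>
    by (simp add: power2_eq_square sum_product mult_ac)
  have products: "integrable M (\<lambda>\<omega>. Y j \<omega> * Y k \<omega>) \<and>
      expectation (\<lambda>\<omega>. Y j \<omega> * Y k \<omega>) = (if j = k then 1 else 0)" if jk: "j \<in> J" "k \<in> J" for j k
  proof (cases "j = k")
    case True
    then show ?thesis using sq_int sq jk by (simp add: power2_eq_square)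
  next
    case False
    have ind_jk: "indep_vars (\<lambda>_. borel) Y {j, k}"
      by (rule indep_vars_subset[OF ind]) (use jk in auto)
    have int_jk: "i \<in> {j, k} \<Longrightarrow> integrable M (Y i)" for i
      using int jk by auto
    have "integrable M (\<lambda>\<omega>. \<Prod>i\<in>{j, k}. Y i \<omega>)"
      by (rule indep_vars_integrable[OF _ ind_jk int_jk]) simp
    moreover have "expectation (\<lambda>\<omega>. \<Prod>i\<in>{j, k}. Y i \<omega>) = (\<Prod>i\<in>{j, k}. expectation (Y i))"
      by (rule indep_vars_lebesgue_integral[OF _ ind_jk int_jk]) simp
    ultimately show ?thesis using False mean jk by simp
  qed
  have "expectation (\<lambda>\<omega>. (\<Sum>j\<in>J. c j * Y j \<omega>)\<^sup>2)
      = (\<Sum>j\<in>J. \<Sum>k\<in>J. (c j * c k) * expectation (\<lambda>\<omega>. Y j \<omega> * Y k \<omega>))"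
    unfolding square_eq using products by (simp add: integral_sum integrable_sum)
  also have "\<dots> = (\<Sum>j\<in>J. \<Sum>k\<in>J. if j = k then (c j)\<^sup>2 else 0)"
    using products by (intro sum.cong refl) (simp add: power2_eq_square)
  also have "\<dots> = (\<Sum>j\<in>J. (c j)\<^sup>2)"
    using fin by (simp add: sum.delta)
  finally show ?thesis .
qed

lemma mgf_sum_squares_indep:
  fixes \<theta> :: real
  assumes fin: "finite J" and ind: "indep_vars (\<lambda>_. borel) Y J"
    and sg: "\<And>j. j \<in> J \<Longrightarrow> subgaussian M 1 (Y j)"
    and sq: "\<And>j. j \<in> J \<Longrightarrow> expectation (\<lambda>\<omega>. (Y j \<omega>)\<^sup>2) = 1" and "\<theta> \<le> 1/5"
  shows "(\<integral>\<^sup>+\<omega>. ennreal (exp (\<theta> * (\<Sum>j\<in>J. (Y j \<omega>)\<^sup>2))) \<partial>M)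
           \<le> ennreal (exp (card J * (\<theta> + 35 * \<theta>\<^sup>2)))"
proof -
  have "(\<integral>\<^sup>+\<omega>. ennreal (exp (\<theta> * (\<Sum>j\<in>J. (Y j \<omega>)\<^sup>2))) \<partial>M)
      = (\<integral>\<^sup>+\<omega>. (\<Prod>j\<in>J. ennreal (exp (\<theta> * (Y j \<omega>)\<^sup>2))) \<partial>M)"
    by (simp add: sum_distrib_left exp_sum fin prod_ennreal)
  also have "\<dots> = (\<Prod>j\<in>J. \<integral>\<^sup>+\<omega>. ennreal (exp (\<theta> * (Y j \<omega>)\<^sup>2)) \<partial>M)"
    by (intro indep_vars_nn_integral fin indep_vars_compose2[OF ind]) auto
  also have "\<dots> \<le> (\<Prod>j\<in>J. ennreal (exp (\<theta> + 35 * \<theta>\<^sup>2)))"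
    using assms by (intro prod_mono_ennreal subgaussian_square_mgf) auto
  also have "\<dots> = ennreal (exp (card J * (\<theta> + 35 * \<theta>\<^sup>2)))"
    by (simp add: exp_of_nat_mult ennreal_power)
  finally show ?thesis .
qed

lemma nn_integral_indep_var_le:
  fixes f :: "'b \<Rightarrow> 'b \<Rightarrow> ennreal"
  assumes ind: "indep_var MA X MB Y" and f: "case_prod f \<in> borel_measurable (MA \<Otimes>\<^sub>M MB)"
    and bound: "\<And>a. a \<in> space MA \<Longrightarrow> (\<integral>\<^sup>+\<omega>. f a (Y \<omega>) \<partial>M) \<le> B"
  shows "(\<integral>\<^sup>+\<omega>. f (X \<omega>) (Y \<omega>) \<partial>M) \<le> B"
proof -
  have X: "X \<in> measurable M MA" and Y: "Y \<in> measurable M MB"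
    using indep_var_rv1[OF ind] indep_var_rv2[OF ind] by auto
  interpret PX: prob_space "distr M MA X" by (rule prob_space_distr[OF X])
  interpret PY: prob_space "distr M MB Y" by (rule prob_space_distr[OF Y])
  have f': "case_prod f \<in> borel_measurable (distr M MA X \<Otimes>\<^sub>M distr M MB Y)"
    using f by (simp cong: measurable_cong_sets[OF sets_pair_measure_cong[OF sets_distr sets_distr] refl])
  have "(\<integral>\<^sup>+\<omega>. f (X \<omega>) (Y \<omega>) \<partial>M) = (\<integral>\<^sup>+p. case_prod f p \<partial>distr M (MA \<Otimes>\<^sub>M MB) (\<lambda>\<omega>. (X \<omega>, Y \<omega>)))"
    using X Y f by (subst nn_integral_distr) auto
  also have "\<dots> = (\<integral>\<^sup>+p. case_prod f p \<partial>(distr M MA X \<Otimes>\<^sub>M distr M MB Y))"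
    using ind indep_var_distribution_eq by metis
  also have "\<dots> = (\<integral>\<^sup>+a. \<integral>\<^sup>+b. f a b \<partial>distr M MB Y \<partial>distr M MA X)"
    using PY.nn_integral_fst[OF f'] by simp
  also have "\<dots> \<le> (\<integral>\<^sup>+a. B \<partial>distr M MA X)"
  proof (rule nn_integral_mono)
    fix a assume "a \<in> space (distr M MA X)"
    then have "(\<integral>\<^sup>+b. f a b \<partial>distr M MB Y) = (\<integral>\<^sup>+\<omega>. f a (Y \<omega>) \<partial>M)"
      using f Y by (subst nn_integral_distr) (auto simp: measurable_Pair2)
    also have "\<dots> \<le> B"
      using bound \<open>a \<in> space (distr M MA X)\<close> by simp
    finally show "(\<integral>\<^sup>+b. f a b \<partial>distr M MB Y) \<le> B" .
  qed
  also have "\<dots> = B"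
    using PX.emeasure_space_1 by simp
  finally show ?thesis .
qed

lemma prob_deviation_le_of_mgf_bound:
  fixes Z :: "'a \<Rightarrow> real" and N u s \<theta> :: real
  assumes [measurable]: "Z \<in> borel_measurable M"
    and mgf: "\<And>\<theta>. \<bar>\<theta>\<bar> \<le> 1/5 \<Longrightarrow>
      (\<integral>\<^sup>+\<omega>. ennreal (exp (\<theta> * Z \<omega>)) \<partial>M) \<le> ennreal (exp (N * (\<theta> + 35 * \<theta>\<^sup>2)))"
    and s: "s = 1 \<or> s = -1" and \<theta>: "0 < \<theta>" "\<theta> \<le> 1/5"
  shows "prob {\<omega> \<in> space M. u \<le> s * (Z \<omega> - N)} \<le> exp (35 * N * \<theta>\<^sup>2 - \<theta> * u)"
proof -
  have "exp (\<theta> * (s * (Z \<omega> - N))) = exp (- \<theta> * s * N) * exp ((\<theta> * s) * Z \<omega>)" for \<omega>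
    by (simp add: exp_add[symmetric] algebra_simps)
  then have "(\<integral>\<^sup>+\<omega>. ennreal (exp (\<theta> * (s * (Z \<omega> - N)))) * indicator (space M) \<omega> \<partial>M)
      = (\<integral>\<^sup>+\<omega>. ennreal (exp (- \<theta> * s * N)) * ennreal (exp ((\<theta> * s) * Z \<omega>)) \<partial>M)"
    by (intro nn_integral_cong) (simp add: ennreal_mult)
  also have "\<dots> = ennreal (exp (- \<theta> * s * N)) * (\<integral>\<^sup>+\<omega>. ennreal (exp ((\<theta> * s) * Z \<omega>)) \<partial>M)"
    by (rule nn_integral_cmult) measurable
  also have "\<dots> \<le> ennreal (exp (- \<theta> * s * N)) * ennreal (exp (N * (\<theta> * s + 35 * (\<theta> * s)\<^sup>2)))"
    using \<theta> s by (intro mult_left_mono mgf) auto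
  also have "\<dots> = ennreal (exp (- \<theta> * s * N + N * (\<theta> * s + 35 * (\<theta> * s)\<^sup>2)))"
    by (subst exp_add) (simp add: ennreal_mult)
  also have "- \<theta> * s * N + N * (\<theta> * s + 35 * (\<theta> * s)\<^sup>2) = 35 * N * \<theta>\<^sup>2"
    using s by (auto simp: power_mult_distrib algebra_simps)
  finally have mgf_shifted: "(\<integral>\<^sup>+\<omega>. ennreal (exp (\<theta> * (s * (Z \<omega> - N)))) * indicator (space M) \<omega> \<partial>M)
      \<le> ennreal (exp (35 * N * \<theta>\<^sup>2))" .
  have "ennreal (prob {\<omega> \<in> space M. u \<le> s * (Z \<omega> - N)})
      \<le> ennreal (exp (- \<theta> * u)) * (\<integral>\<^sup>+\<omega>. ennreal (exp (\<theta> * (s * (Z \<omega> - N)))) * indicator (space M) \<omega> \<partial>M)"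
    using Chernoff_ineq_nn_integral_ge[of \<theta> "space M" M "\<lambda>\<omega>. s * (Z \<omega> - N)" u] \<theta>
    by (simp add: emeasure_eq_measure)
  also have "\<dots> \<le> ennreal (exp (- \<theta> * u)) * ennreal (exp (35 * N * \<theta>\<^sup>2))"
    by (intro mult_left_mono mgf_shifted) simp
  also have "\<dots> = ennreal (exp (- \<theta> * u + 35 * N * \<theta>\<^sup>2))"
    by (subst exp_add) (simp add: ennreal_mult)
  finally show ?thesis
    by (simp add: ennreal_le_iff add.commute)
qed

lemma prob_deviation_lt_of_mgf_bound:
  fixes Z :: "'a \<Rightarrow> real" and N u :: real
  assumes [measurable]: "Z \<in> borel_measurable M" and "N > 0" "u > 0"
    and mgf: "\<And>\<theta>. \<bar>\<theta>\<bar> \<le> 1/5 \<Longrightarrow>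
      (\<integral>\<^sup>+\<omega>. ennreal (exp (\<theta> * Z \<omega>)) \<partial>M) \<le> ennreal (exp (N * (\<theta> + 35 * \<theta>\<^sup>2)))"
  shows "prob {\<omega> \<in> space M. u < \<bar>Z \<omega> - N\<bar>} < 2 * exp (- min (u\<^sup>2 / (160 * N)) (u / 10))"
proof -
  have one_sided: "prob {\<omega> \<in> space M. u \<le> s * (Z \<omega> - N)} < exp (- min (u\<^sup>2 / (160 * N)) (u / 10))"
    if "s = 1 \<or> s = -1" for s
    using \<open>N > 0\<close> \<open>u > 0\<close> prob_deviation_le_of_mgf_bound[OF _ mgf that]
    by (intro Chernoff_exponent_optimise) auto
  have "prob {\<omega> \<in> space M. u < \<bar>Z \<omega> - N\<bar>}
      \<le> prob ({\<omega> \<in> space M. u \<le> 1 * (Z \<omega> - N)} \<union> {\<omega> \<in> space M. u \<le> -1 * (Z \<omega> - N)})"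
    by (rule finite_measure_mono) auto
  also have "\<dots> \<le> prob {\<omega> \<in> space M. u \<le> 1 * (Z \<omega> - N)} + prob {\<omega> \<in> space M. u \<le> -1 * (Z \<omega> - N)}"
    by (rule measure_Un_le) measurable
  also have "\<dots> < 2 * exp (- min (u\<^sup>2 / (160 * N)) (u / 10))"
    using one_sided[of 1] one_sided[of "-1"] by linarith
  finally show ?thesis .
qed

end

lemma entries_Inl [simp]: "entries x S (Inl j) = x j"
  and entries_Inr [simp]: "entries x S (Inr (i, j)) = S i j"
  by (simp_all add: entries_def)

lemma Inl_in_entry_index_iff [simp]: "Inl j \<in> entry_index m n \<longleftrightarrow> j < n"
  and Inr_in_entry_index_iff [simp]: "Inr (i, j) \<in> entry_index m n \<longleftrightarrow> i < m \<and> j < n"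
  by (auto simp: entry_index_def)

lemma sqnorm_X_nonneg: "0 \<le> sqnorm_X n x \<omega>"
  by (simp add: sqnorm_X_def sum_nonneg)

lemma sqnorm_AX_eq_0_if_sqnorm_X_eq_0:
  assumes "sqnorm_X n x \<omega> = 0"
  shows "sqnorm_AX m n S x \<omega> = 0"
proof -
  have "\<forall>j\<in>{..<n}. (x j \<omega>)\<^sup>2 = 0"
    using assms by (subst sum_nonneg_eq_0_iff[symmetric]) (auto simp: sqnorm_X_def)
  then show ?thesis by (simp add: sqnorm_AX_def)
qed

lemma sqnorm_AX_eq: "real m * sqnorm_AX m n S x \<omega> = (\<Sum>i<m. (\<Sum>j<n. S i j \<omega> * x j \<omega>)\<^sup>2)"
proof -
  have row: "(\<Sum>j<n. 1 / sqrt (real m) * S i j \<omega> * x j \<omega>)\<^sup>2 = (\<Sum>j<n. S i j \<omega> * x j \<omega>)\<^sup>2 / real m" for i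
  proof -
    have "(\<Sum>j<n. 1 / sqrt (real m) * S i j \<omega> * x j \<omega>) = (\<Sum>j<n. S i j \<omega> * x j \<omega>) / sqrt (real m)"
      by (simp add: sum_divide_distrib)
    then show ?thesis by (simp add: power_divide)
  qed
  have "sqnorm_AX m n S x \<omega> = (\<Sum>i<m. (\<Sum>j<n. S i j \<omega> * x j \<omega>)\<^sup>2) / real m"
    unfolding sqnorm_AX_def row by (simp add: sum_divide_distrib)
  then show ?thesis by (cases "m = 0") auto
qed

(* ||S X||^2 / ||X||^2 = m ||A X||^2 / ||X||^2, given the value m (its mean) where X = 0. *)
definition sketch_ratio :: "nat \<Rightarrow> nat \<Rightarrow> (nat \<Rightarrow> nat \<Rightarrow> 'a \<Rightarrow> real) \<Rightarrow> (nat \<Rightarrow> 'a \<Rightarrow> real) \<Rightarrow> 'a \<Rightarrow> real"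
  where "sketch_ratio m n S x \<omega> =
    (if sqnorm_X n x \<omega> = 0 then real m else real m * sqnorm_AX m n S x \<omega> / sqnorm_X n x \<omega>)"

lemma sketch_ratio_cong:
  assumes "\<And>j. j < n \<Longrightarrow> x j \<omega> = x' j \<omega>'"
    and "\<And>i j. i < m \<Longrightarrow> j < n \<Longrightarrow> S i j \<omega> = S' i j \<omega>'"
  shows "sketch_ratio m n S x \<omega> = sketch_ratio m n S' x' \<omega>'"
  using assms by (simp add: sketch_ratio_def sqnorm_X_def sqnorm_AX_def)

lemma sketch_ratio_deviation:
  assumes "m > 0" "n > 0"
    and dev: "1 / sqrt (real n) * \<bar>sqnorm_AX m n S x \<omega> - sqnorm_X n x \<omega>\<bar> > sqnorm_X n x \<omega> / real n * t"
  shows "real m * t / sqrt (real n) < \<bar>sketch_ratio m n S x \<omega> - real m\<bar>"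
proof -
  define q where "q = sqnorm_X n x \<omega>"
  have "q \<noteq> 0"
    using dev sqnorm_AX_eq_0_if_sqnorm_X_eq_0 by (force simp: q_def)
  then have q: "q > 0"
    using sqnorm_X_nonneg[of n x \<omega>] by (simp add: q_def)
  define D where "D = \<bar>sqnorm_AX m n S x \<omega> - q\<bar>"
  have "q * t = real n * (q / real n * t)"
    using \<open>n > 0\<close> by simp
  also have "\<dots> < real n * (1 / sqrt (real n) * D)"
    using dev \<open>n > 0\<close> by (intro mult_strict_left_mono) (auto simp: q_def D_def)
  also have "\<dots> = (real n / sqrt (real n)) * D"
    by simp
  also have "\<dots> = sqrt (real n) * D"
    by (simp only: real_div_sqrt[OF of_nat_0_le_iff])
  finally have "q * t / sqrt (real n) < \<bar>sqnorm_AX m n S x \<omega> - q\<bar>"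
    using \<open>n > 0\<close> by (simp add: D_def pos_divide_less_eq mult.commute)
  then have "real m / q * (q * t / sqrt (real n)) < real m / q * \<bar>sqnorm_AX m n S x \<omega> - q\<bar>"
    using q \<open>m > 0\<close> by (intro mult_strict_left_mono) auto
  moreover have "sketch_ratio m n S x \<omega> - real m = real m / q * (sqnorm_AX m n S x \<omega> - q)"
    using q by (simp add: sketch_ratio_def q_def[symmetric] field_simps)
  then have "real m / q * \<bar>sqnorm_AX m n S x \<omega> - q\<bar> = \<bar>sketch_ratio m n S x \<omega> - real m\<bar>"
    using q by (simp add: abs_mult)
  ultimately show ?thesis
    using q by simp
qed

context prob_space
begin

lemma sqnorm_X_tail:
  fixes x :: "nat \<Rightarrow> 'a \<Rightarrow> real"
  assumes ind: "indep_vars (\<lambda>_. borel) x {..<n}" and "n > 0"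
    and sg: "\<And>j. j < n \<Longrightarrow> subgaussian M 1 (x j)"
    and sq: "\<And>j. j < n \<Longrightarrow> expectation (\<lambda>\<omega>. (x j \<omega>)\<^sup>2) = 1" and "t > 0"
  shows "prob {\<omega> \<in> space M. 1 / sqrt (real n) * \<bar>sqnorm_X n x \<omega> - real n\<bar> > t}
           < 2 * exp (- min (t\<^sup>2 / 160) (t * sqrt (real n) / 10))"
proof -
  have [measurable]: "j < n \<Longrightarrow> x j \<in> borel_measurable M" for j
    using ind by (simp add: indep_vars_def)
  have "{\<omega> \<in> space M. 1 / sqrt (real n) * \<bar>sqnorm_X n x \<omega> - real n\<bar> > t}
      = {\<omega> \<in> space M. t * sqrt (real n) < \<bar>sqnorm_X n x \<omega> - real n\<bar>}"
    using \<open>n > 0\<close> by (auto simp: field_simps)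
  also have "prob \<dots> < 2 * exp (- min ((t * sqrt (real n))\<^sup>2 / (160 * real n)) (t * sqrt (real n) / 10))"
  proof (rule prob_deviation_lt_of_mgf_bound)
    show "sqnorm_X n x \<in> borel_measurable M"
      unfolding sqnorm_X_def by measurable
    fix \<theta> :: real assume "\<bar>\<theta>\<bar> \<le> 1/5"
    then show "(\<integral>\<^sup>+\<omega>. ennreal (exp (\<theta> * sqnorm_X n x \<omega>)) \<partial>M) \<le> ennreal (exp (real n * (\<theta> + 35 * \<theta>\<^sup>2)))"
      using mgf_sum_squares_indep[OF _ ind, of \<theta>] sg sq by (simp add: sqnorm_X_def)
  qed (use \<open>n > 0\<close> \<open>t > 0\<close> in auto)
  also have "(t * sqrt (real n))\<^sup>2 / (160 * real n) = t\<^sup>2 / 160"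
    using \<open>n > 0\<close> by (simp add: power_mult_distrib)
  finally show ?thesis .
qed

lemma indep_vars_matrix_of_entries:
  assumes "indep_vars (\<lambda>_. borel) (entries x S) (entry_index m n)"
  shows "indep_vars (\<lambda>_. borel) (\<lambda>(i, j). S i j) ({..<m} \<times> {..<n})"
proof -
  have "indep_vars (\<lambda>_. borel) (\<lambda>p. entries x S (Inr p)) ({..<m} \<times> {..<n})"
    by (rule indep_vars_reindex[OF assms]) (auto simp: entry_index_def)
  moreover have "(\<lambda>p. entries x S (Inr p)) = (\<lambda>(i, j). S i j)"
    by (auto simp: fun_eq_iff)
  ultimately show ?thesis by simp
qed

lemma indep_vars_vector_of_entries:
  assumes "indep_vars (\<lambda>_. borel) (entries x S) (entry_index m n)"
  shows "indep_vars (\<lambda>_. borel) x {..<n}"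
  using indep_vars_reindex[OF assms, of Inl "{..<n}"] by (simp add: image_subset_iff)

lemma indep_vars_row_combinations:
  fixes S :: "nat \<Rightarrow> nat \<Rightarrow> 'a \<Rightarrow> real" and c :: "nat \<Rightarrow> real"
  assumes "indep_vars (\<lambda>_. borel) (\<lambda>(i, j). S i j) ({..<m} \<times> {..<n})"
  shows "indep_vars (\<lambda>_. borel) (\<lambda>i \<omega>. \<Sum>j<n. c j * S i j \<omega>) {..<m}"
proof -
  have "indep_vars (\<lambda>_. borel)
      (\<lambda>i \<omega>. (\<lambda>r. \<Sum>j<n. c j * r (i, j)) (\<lambda>p\<in>{i} \<times> {..<n}. (\<lambda>(i, j). S i j) p \<omega>)) {..<m}"
  proof (rule indep_vars_compose_restrict[OF assms])
    fix i
    have [measurable]: "j < n \<Longrightarrow> (\<lambda>r. r (i, j)) \<in> borel_measurable (PiM ({i} \<times> {..<n}) (\<lambda>_. borel))" for j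
      by (rule measurable_component_singleton) simp
    show "(\<lambda>r. \<Sum>j<n. c j * r (i, j)) \<in> borel_measurable (PiM ({i} \<times> {..<n}) (\<lambda>_. borel))"
      by measurable
  qed (auto simp: disjoint_family_on_def)
  then show ?thesis by simp
qed

lemma sketch_ratio_mgf_fixed_vector:
  fixes S :: "nat \<Rightarrow> nat \<Rightarrow> 'a \<Rightarrow> real" and v :: "nat \<Rightarrow> real" and \<theta> :: real
  assumes ind: "indep_vars (\<lambda>_. borel) (\<lambda>(i, j). S i j) ({..<m} \<times> {..<n})"
    and sg: "\<And>i j. i < m \<Longrightarrow> j < n \<Longrightarrow> subgaussian M 1 (S i j)"
    and mean: "\<And>i j. i < m \<Longrightarrow> j < n \<Longrightarrow> expectation (S i j) = 0"
    and sq: "\<And>i j. i < m \<Longrightarrow> j < n \<Longrightarrow> expectation (\<lambda>\<omega>. (S i j \<omega>)\<^sup>2) = 1"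
    and "\<theta> \<le> 1/5"
  shows "(\<integral>\<^sup>+\<omega>. ennreal (exp (\<theta> * sketch_ratio m n S (\<lambda>j _. v j) \<omega>)) \<partial>M)
           \<le> ennreal (exp (real m * (\<theta> + 35 * \<theta>\<^sup>2)))"
proof (cases "(\<Sum>j<n. (v j)\<^sup>2) = 0")
  case True
  then have "sketch_ratio m n S (\<lambda>j _. v j) \<omega> = real m" for \<omega>
    by (simp add: sketch_ratio_def sqnorm_X_def)
  moreover have "exp (\<theta> * real m) \<le> exp (real m * (\<theta> + 35 * \<theta>\<^sup>2))"
    by (simp add: algebra_simps)
  ultimately show ?thesis
    by (simp add: emeasure_space_1 ennreal_leI)
next
  case False
  define q where "q = (\<Sum>j<n. (v j)\<^sup>2)"
  have q: "q > 0"
    using False sum_nonneg[of "{..<n}" "\<lambda>j. (v j)\<^sup>2"] by (simp add: q_def)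
  define c where "c j = v j / sqrt q" for j
  define W where "W i \<omega> = (\<Sum>j<n. c j * S i j \<omega>)" for i \<omega>
  have c_unit: "(\<Sum>j<n. (c j)\<^sup>2 * 1) = 1"
    using q by (simp add: c_def power_divide sum_divide_distrib[symmetric] q_def[symmetric])
  have ratio: "sketch_ratio m n S (\<lambda>j _. v j) \<omega> = (\<Sum>i<m. (W i \<omega>)\<^sup>2)" for \<omega>
  proof -
    have "(W i \<omega>)\<^sup>2 = (\<Sum>j<n. S i j \<omega> * v j)\<^sup>2 / q" for i
      using q by (simp add: W_def c_def sum_divide_distrib[symmetric] power_divide mult.commute)
    then show ?thesis
      using q sqnorm_AX_eq[of m n S "\<lambda>j _. v j" \<omega>]
      by (simp add: sketch_ratio_def sqnorm_X_def q_def[symmetric] sum_divide_distrib)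
  qed
  have row_indep: "indep_vars (\<lambda>_. borel) (S i) {..<n}" if "i < m" for i
    using indep_vars_reindex[OF ind, of "\<lambda>j. (i, j)" "{..<n}"] that by (auto simp: inj_on_def)
  have W_indep: "indep_vars (\<lambda>_. borel) W {..<m}"
    using indep_vars_row_combinations[OF ind, of c] by (simp add: W_def[abs_def])
  have W_subgaussian: "subgaussian M 1 (W i)" if "i < m" for i
    using subgaussian_sum_indep[OF _ row_indep[OF that], of "\<lambda>_. 1" c] sg that c_unit
    by (simp add: W_def[abs_def])
  have W_second_moment: "expectation (\<lambda>\<omega>. (W i \<omega>)\<^sup>2) = 1" if "i < m" for i
    using second_moment_sum_indep[OF _ row_indep[OF that], of c] that mean sq
      subgaussian_even_moment(1)[OF sg, of i _ 1] c_unit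
    by (simp add: W_def)
  have "(\<integral>\<^sup>+\<omega>. ennreal (exp (\<theta> * (\<Sum>i<m. (W i \<omega>)\<^sup>2))) \<partial>M) \<le> ennreal (exp (real m * (\<theta> + 35 * \<theta>\<^sup>2)))"
    using mgf_sum_squares_indep[OF _ W_indep W_subgaussian W_second_moment \<open>\<theta> \<le> 1/5\<close>] by simp
  then show ?thesis
    by (simp add: ratio)
qed

lemma sketch_ratio_mgf:
  fixes x :: "nat \<Rightarrow> 'a \<Rightarrow> real" and S :: "nat \<Rightarrow> nat \<Rightarrow> 'a \<Rightarrow> real" and \<theta> :: real
  assumes ind: "indep_vars (\<lambda>_. borel) (entries x S) (entry_index m n)"
    and sg: "\<And>i j. i < m \<Longrightarrow> j < n \<Longrightarrow> subgaussian M 1 (S i j)"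
    and mean: "\<And>i j. i < m \<Longrightarrow> j < n \<Longrightarrow> expectation (S i j) = 0"
    and sq: "\<And>i j. i < m \<Longrightarrow> j < n \<Longrightarrow> expectation (\<lambda>\<omega>. (S i j \<omega>)\<^sup>2) = 1"
    and "\<theta> \<le> 1/5"
  shows "(\<integral>\<^sup>+\<omega>. ennreal (exp (\<theta> * sketch_ratio m n S x \<omega>)) \<partial>M) \<le> ennreal (exp (real m * (\<theta> + 35 * \<theta>\<^sup>2)))"
proof -
  define L :: "(nat + nat \<times> nat) set" where "L = Inl ` {..<n}"
  define R :: "(nat + nat \<times> nat) set" where "R = Inr ` ({..<m} \<times> {..<n})"
  define PL :: "((nat + nat \<times> nat) \<Rightarrow> real) measure" where "PL = PiM L (\<lambda>_. borel)"
  define PR :: "((nat + nat \<times> nat) \<Rightarrow> real) measure" where "PR = PiM R (\<lambda>_. borel)"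
  have "L \<inter> R = {}" "L \<subseteq> entry_index m n" "R \<subseteq> entry_index m n"
    by (auto simp: L_def R_def entry_index_def)
  then have indep_XS: "indep_var PL (\<lambda>\<omega>. \<lambda>k\<in>L. entries x S k \<omega>) PR (\<lambda>\<omega>. \<lambda>k\<in>R. entries x S k \<omega>)"
    unfolding PL_def PR_def by (rule indep_var_restrict[OF ind])
  have S_indep: "indep_vars (\<lambda>_. borel) (\<lambda>(i, j). S i j) ({..<m} \<times> {..<n})"
    using ind by (rule indep_vars_matrix_of_entries)
  define g where "g p = ennreal (exp (\<theta> * sketch_ratio m n (\<lambda>i j p. snd p (Inr (i, j))) (\<lambda>j p. fst p (Inl j)) p))"
    for p :: "((nat + nat \<times> nat) \<Rightarrow> real) \<times> ((nat + nat \<times> nat) \<Rightarrow> real)"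
  have [measurable]: "j < n \<Longrightarrow> (\<lambda>p. fst p (Inl j)) \<in> borel_measurable (PL \<Otimes>\<^sub>M PR)" for j
    unfolding PL_def by (rule measurable_compose[OF measurable_fst measurable_component_singleton]) (simp add: L_def)
  have [measurable]: "i < m \<Longrightarrow> j < n \<Longrightarrow> (\<lambda>p. snd p (Inr (i, j))) \<in> borel_measurable (PL \<Otimes>\<^sub>M PR)" for i j
    unfolding PR_def by (rule measurable_compose[OF measurable_snd measurable_component_singleton]) (simp add: R_def)
  have g_measurable: "case_prod (\<lambda>a b. g (a, b)) \<in> borel_measurable (PL \<Otimes>\<^sub>M PR)"
    unfolding g_def sketch_ratio_def sqnorm_X_def sqnorm_AX_def by measurable
  have "(\<integral>\<^sup>+\<omega>. ennreal (exp (\<theta> * sketch_ratio m n S x \<omega>)) \<partial>M)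
      = (\<integral>\<^sup>+\<omega>. g (\<lambda>k\<in>L. entries x S k \<omega>, \<lambda>k\<in>R. entries x S k \<omega>) \<partial>M)"
    unfolding g_def
    by (intro nn_integral_cong arg_cong[where f = "\<lambda>r. ennreal (exp (\<theta> * r))"] sketch_ratio_cong)
       (auto simp: L_def R_def entries_def)
  also have "\<dots> \<le> ennreal (exp (real m * (\<theta> + 35 * \<theta>\<^sup>2)))"
  proof (rule nn_integral_indep_var_le[OF indep_XS g_measurable])
    fix a
    have "g (a, \<lambda>k\<in>R. entries x S k \<omega>) = ennreal (exp (\<theta> * sketch_ratio m n S (\<lambda>j _. a (Inl j)) \<omega>))" for \<omega>
      unfolding g_def
      by (intro arg_cong[where f = "\<lambda>r. ennreal (exp (\<theta> * r))"] sketch_ratio_cong)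
         (auto simp: R_def entries_def)
    then show "(\<integral>\<^sup>+\<omega>. g (a, \<lambda>k\<in>R. entries x S k \<omega>) \<partial>M) \<le> ennreal (exp (real m * (\<theta> + 35 * \<theta>\<^sup>2)))"
      using sketch_ratio_mgf_fixed_vector[OF S_indep sg mean sq \<open>\<theta> \<le> 1/5\<close>] by simp
  qed
  finally show ?thesis .
qed

lemma sqnorm_AX_tail:
  fixes x :: "nat \<Rightarrow> 'a \<Rightarrow> real" and S :: "nat \<Rightarrow> nat \<Rightarrow> 'a \<Rightarrow> real"
  assumes ind: "indep_vars (\<lambda>_. borel) (entries x S) (entry_index m n)" and "m > 0" "n > 0"
    and sg: "\<And>i j. i < m \<Longrightarrow> j < n \<Longrightarrow> subgaussian M 1 (S i j)"
    and mean: "\<And>i j. i < m \<Longrightarrow> j < n \<Longrightarrow> expectation (S i j) = 0"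
    and sq: "\<And>i j. i < m \<Longrightarrow> j < n \<Longrightarrow> expectation (\<lambda>\<omega>. (S i j \<omega>)\<^sup>2) = 1"
    and "t > 0"
  shows "prob {\<omega> \<in> space M.
             1 / sqrt (real n) * \<bar>sqnorm_AX m n S x \<omega> - sqnorm_X n x \<omega>\<bar> > sqnorm_X n x \<omega> / real n * t}
           < 2 * exp (- min (t\<^sup>2 * (real m / real n) / 160) (t * (real m / real n) * sqrt (real n) / 10))"
proof -
  have [measurable]: "j < n \<Longrightarrow> x j \<in> borel_measurable M"
    and [measurable]: "i < m \<Longrightarrow> j < n \<Longrightarrow> S i j \<in> borel_measurable M" for i j
    using indep_vars_vector_of_entries[OF ind] indep_vars_matrix_of_entries[OF ind]
    by (auto simp: indep_vars_def)
  have ratio_measurable [measurable]: "sketch_ratio m n S x \<in> borel_measurable M"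
    unfolding sketch_ratio_def sqnorm_X_def sqnorm_AX_def by measurable
  define u where "u = real m * t / sqrt (real n)"
  have "{\<omega> \<in> space M.
             1 / sqrt (real n) * \<bar>sqnorm_AX m n S x \<omega> - sqnorm_X n x \<omega>\<bar> > sqnorm_X n x \<omega> / real n * t}
      \<subseteq> {\<omega> \<in> space M. u < \<bar>sketch_ratio m n S x \<omega> - real m\<bar>}"
    using sketch_ratio_deviation[OF \<open>m > 0\<close> \<open>n > 0\<close>] by (auto simp: u_def)
  then have "prob {\<omega> \<in> space M.
             1 / sqrt (real n) * \<bar>sqnorm_AX m n S x \<omega> - sqnorm_X n x \<omega>\<bar> > sqnorm_X n x \<omega> / real n * t}
      \<le> prob {\<omega> \<in> space M. u < \<bar>sketch_ratio m n S x \<omega> - real m\<bar>}"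
    by (rule finite_measure_mono) measurable
  also have "\<dots> < 2 * exp (- min (u\<^sup>2 / (160 * real m)) (u / 10))"
  proof (rule prob_deviation_lt_of_mgf_bound[OF ratio_measurable])
    show "real m > 0" "u > 0"
      using \<open>m > 0\<close> \<open>n > 0\<close> \<open>t > 0\<close> by (simp_all add: u_def)
    fix \<theta> :: real assume "\<bar>\<theta>\<bar> \<le> 1/5"
    then show "(\<integral>\<^sup>+\<omega>. ennreal (exp (\<theta> * sketch_ratio m n S x \<omega>)) \<partial>M) \<le> ennreal (exp (real m * (\<theta> + 35 * \<theta>\<^sup>2)))"
      by (intro sketch_ratio_mgf[OF ind sg mean sq]) auto
  qed
  also have "u\<^sup>2 / (160 * real m) = t\<^sup>2 * (real m / real n) / 160"
  proof -
    have "u\<^sup>2 = real m * real m * t\<^sup>2 / real n"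
      by (simp add: u_def power_divide power_mult_distrib power2_eq_square)
    then show ?thesis using \<open>m > 0\<close> by simp
  qed
  also have "u / 10 = t * (real m / real n) * sqrt (real n) / 10"
  proof -
    have "t * (real m / real n) * sqrt (real n) = t * (real m / (real n / sqrt (real n)))"
      by simp
    then show ?thesis by (simp add: u_def real_div_sqrt)
  qed
  finally show ?thesis .
qed

end

theorem theorem1:
  fixes M :: "'a measure" and m n :: nat
    and x :: "nat \<Rightarrow> 'a \<Rightarrow> real" and S :: "nat \<Rightarrow> nat \<Rightarrow> 'a \<Rightarrow> real"
  assumes "prob_space M"
    and "m \<ge> 1" and "n \<ge> 1"
    and rv: "\<And>k. k \<in> entry_index m n \<Longrightarrow> entries x S k \<in> borel_measurable M"
    and indep: "prob_space.indep_vars M (\<lambda>_. borel) (entries x S) (entry_index m n)"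
    and ident: "\<And>k k'. k \<in> entry_index m n \<Longrightarrow> k' \<in> entry_index m n \<Longrightarrow>
                   distr M borel (entries x S k) = distr M borel (entries x S k')"
    and mean: "\<And>k. k \<in> entry_index m n \<Longrightarrow>
                   integrable M (entries x S k) \<and> prob_space.expectation M (entries x S k) = 0"
    and var: "\<And>k. k \<in> entry_index m n \<Longrightarrow>
                   integrable M (\<lambda>\<omega>. (entries x S k \<omega>)\<^sup>2) \<and> prob_space.variance M (entries x S k) = 1"
    and subg: "\<And>k. k \<in> entry_index m n \<Longrightarrow> subgaussian M 1 (entries x S k)"
    and "t > 0"
  shows "prob_space.prob M {\<omega> \<in> space M. 1 / sqrt (real n) * \<bar>sqnorm_X n x \<omega> - real n\<bar> > t}
           < 2 * exp (- min (t\<^sup>2 / 160) (t * sqrt (real n) / 10)) \<and>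
         prob_space.prob M {\<omega> \<in> space M.
             1 / sqrt (real n) * \<bar>sqnorm_AX m n S x \<omega> - sqnorm_X n x \<omega>\<bar> > sqnorm_X n x \<omega> / real n * t}
           < 2 * exp (- min (t\<^sup>2 * (real m / real n) / 160) (t * (real m / real n) * sqrt (real n) / 10))"
proof -
  interpret prob_space M by fact
  have square_mean: "expectation (\<lambda>\<omega>. (entries x S k \<omega>)\<^sup>2) = 1" if "k \<in> entry_index m n" for k
    using mean[OF that] var[OF that] by simp
  have x_subg: "subgaussian M 1 (x j)" and x_square: "expectation (\<lambda>\<omega>. (x j \<omega>)\<^sup>2) = 1"
    if "j < n" for j
    using subg[of "Inl j"] square_mean[of "Inl j"] that by simp_all
  have S_subg: "subgaussian M 1 (S i j)" and S_mean: "expectation (S i j) = 0"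
    and S_square: "expectation (\<lambda>\<omega>. (S i j \<omega>)\<^sup>2) = 1" if "i < m" "j < n" for i j
    using subg[of "Inr (i, j)"] mean[of "Inr (i, j)"] square_mean[of "Inr (i, j)"] that by simp_all
  show ?thesis
    using sqnorm_X_tail[OF indep_vars_vector_of_entries[OF indep] _ x_subg x_square \<open>t > 0\<close>]
      sqnorm_AX_tail[OF indep _ _ S_subg S_mean S_square \<open>t > 0\<close>] \<open>m \<ge> 1\<close> \<open>n \<ge> 1\<close>
    by simp
qed

end
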